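(* In $A_n$ we have, for all $a\in\mathbb{N}_0$, \[ T_i\omega_k^a=\omega_k^aT_i \quad (i\neq k),\qquad T_i(\omega_i^a-x_{i+1}\omega_{i+1}^a)=(\omega_i^a-x_{i+1}\omega_{i+1}^a)T_i, \] for all $1\le i\le n-1$ and $1\le k\le n$.
   Context: $R=\mathbb{Z}[x_1,\dots,x_n]\otimes\bigwedge^\bullet(\omega_1,\dots,\omega_n)$ (supercommutative, $x_i$ even, $\omega_i$ odd); $S_n$ acts by $s_i(x_j)=x_{s_i(j)}$, $s_i(\omega_j)=\omega_j+\delta_{ij}(x_i-x_{i+1})\omega_{i+1}$; $T_i$ denotes the Demazure operator $f\mapsto(f-s_i(f))/(x_i-x_{i+1})$. $A_n$ is the superalgebra of operators on $R$ generated by the $T_i$ and multiplication by elements of $R$. Labeled elements: $\omega_k^0=\omega_k$, $\omega_0^a=0$, $\omega_k^a=\omega_{k-1}^{a-1}-x_k\omega_k^{a-1}$ for $a\ge1$. *)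

theory Defs
  imports "HOL-Library.Poly_Mapping"
begin

text \<open>The superalgebra R = Z[x_1,x_2,...] tensor Lambda(omega_1,omega_2,...), as the free
  Z-module with basis x^alpha omega_S, where alpha is a finitely supported exponent vector and
  omega_S = omega_(s1) ... omega_(sm) for S = {s1 < ... < sm}.  The ring R of the paper (with n
  variables) is the subset inR n (only indices 1..n occur).\<close>

type_synonym R = "((nat \<Rightarrow>\<^sub>0 nat) \<times> nat set) \<Rightarrow>\<^sub>0 int"

text \<open>Sign of omega_A omega_B = sgn * omega_(A union B) for disjoint A, B.\<close>
definition wsign :: "nat set \<Rightarrow> nat set \<Rightarrow> int" where
  "wsign A B = (-1) ^ card {(a, b). a \<in> A \<and> b \<in> B \<and> b < a}"

definition rmul :: "R \<Rightarrow> R \<Rightarrow> R" where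
  "rmul f g = (\<Sum>p\<in>Poly_Mapping.keys f. \<Sum>q\<in>Poly_Mapping.keys g.
      if snd p \<inter> snd q = {}
      then Poly_Mapping.single (fst p + fst q, snd p \<union> snd q)
             (wsign (snd p) (snd q) * Poly_Mapping.lookup f p * Poly_Mapping.lookup g q)
      else 0)"

definition rconst :: "int \<Rightarrow> R" where
  "rconst c = Poly_Mapping.single (0, {}) c"

definition X :: "nat \<Rightarrow> R" where
  "X j = Poly_Mapping.single (Poly_Mapping.single j 1, {}) 1"

definition W :: "nat \<Rightarrow> R" where
  "W j = Poly_Mapping.single (0, {j}) 1"

definition rprod :: "R list \<Rightarrow> R" where
  "rprod xs = foldr rmul xs (rconst 1)"

text \<open>The algebra endomorphism of R determined by images of the generators x_j and omega_j.\<close>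
definition hom_eval :: "(nat \<Rightarrow> R) \<Rightarrow> (nat \<Rightarrow> R) \<Rightarrow> R \<Rightarrow> R" where
  "hom_eval px pw f = (\<Sum>p\<in>Poly_Mapping.keys f. rmul (rconst (Poly_Mapping.lookup f p))
      (rprod (concat (map (\<lambda>j. replicate (Poly_Mapping.lookup (fst p) j) (px j))
                          (sorted_list_of_set (Poly_Mapping.keys (fst p))))
              @ map pw (sorted_list_of_set (snd p)))))"

definition s :: "nat \<Rightarrow> R \<Rightarrow> R" where
  "s i = hom_eval
     (\<lambda>j. X (if j = i then Suc i else if j = Suc i then i else j))
     (\<lambda>j. if j = i then W i + rmul (X i - X (Suc i)) (W (Suc i)) else W j)"

definition T :: "nat \<Rightarrow> R \<Rightarrow> R" where
  "T i f = (THE g. rmul (X i - X (Suc i)) g = f - s i f)"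

fun omega :: "nat \<Rightarrow> nat \<Rightarrow> R" where
  "omega 0 a = 0"
| "omega (Suc k) 0 = W (Suc k)"
| "omega (Suc k) (Suc a) = omega k a - rmul (X (Suc k)) (omega (Suc k) a)"

definition inR :: "nat \<Rightarrow> R \<Rightarrow> bool" where
  "inR n f = (\<forall>p\<in>Poly_Mapping.keys f. Poly_Mapping.keys (fst p) \<subseteq> {1..n} \<and> snd p \<subseteq> {1..n})"

end

(*
  The action of s_i is the algebra endomorphism of R fixing x_j and omega_j except for
  x_i <-> x_(i+1) and omega_i |-> omega_i + (x_i - x_(i+1)) omega_(i+1).  Every generator is
  therefore congruent to its image modulo d = x_i - x_(i+1), so d divides f - s_i f; as d is not
  a zero divisor, T_i f is well defined.  If g is s_i-invariant and s_i(g f) = s_i(g) s_i(f),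
  then g f - s_i(g f) = g (f - s_i f), i.e. T_i(g f) = g T_i(f).  By induction on a, s_i fixes
  omega_k^a for k <> i and sends omega_i^a to omega_i^a + d omega_(i+1)^a; hence s_i also fixes
  omega_i^a - x_(i+1) omega_(i+1)^a = omega_(i+1)^(a+1).
*)

theory Submission
  imports Defs "HOL-Library.Multiset"
begin

abbreviation lookup :: "('a \<Rightarrow>\<^sub>0 'b::zero) \<Rightarrow> 'a \<Rightarrow> 'b"
  where "lookup \<equiv> Poly_Mapping.lookup"
abbreviation keys :: "('a \<Rightarrow>\<^sub>0 'b::zero) \<Rightarrow> 'a set"
  where "keys \<equiv> Poly_Mapping.keys"
abbreviation single :: "'a \<Rightarrow> 'b \<Rightarrow> 'a \<Rightarrow>\<^sub>0 'b::zero"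
  where "single \<equiv> Poly_Mapping.single"

type_synonym basis = "(nat \<Rightarrow>\<^sub>0 nat) \<times> nat set"

section \<open>Multiplication in R\<close>

definition basis_mul :: "basis \<Rightarrow> basis \<Rightarrow> int \<Rightarrow> int \<Rightarrow> R" where
  "basis_mul p q a b =
    (if snd p \<inter> snd q = {}
     then single (fst p + fst q, snd p \<union> snd q) (wsign (snd p) (snd q) * a * b) else 0)"

lemma rmul_eq_sum_basis_mul:
  "rmul f g = (\<Sum>p\<in>keys f. \<Sum>q\<in>keys g. basis_mul p q (lookup f p) (lookup g q))"
  unfolding rmul_def basis_mul_def by (rule sum.cong[OF refl])+ simp

lemma basis_mul_zero_left[simp]: "basis_mul p q 0 b = 0"
  and basis_mul_zero_right[simp]: "basis_mul p q a 0 = 0"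
  by (simp_all add: basis_mul_def)

lemma basis_mul_add_left: "basis_mul p q (a + a') b = basis_mul p q a b + basis_mul p q a' b"
  and basis_mul_add_right: "basis_mul p q a (b + b') = basis_mul p q a b + basis_mul p q a b'"
  by (simp_all add: basis_mul_def single_add algebra_simps)

lemma rmul_eq_sum_basis_mul_superset:
  assumes "finite P" "keys f \<subseteq> P" "finite Q" "keys g \<subseteq> Q"
  shows "rmul f g = (\<Sum>p\<in>P. \<Sum>q\<in>Q. basis_mul p q (lookup f p) (lookup g q))"
proof -
  have "(\<Sum>p\<in>P. \<Sum>q\<in>Q. basis_mul p q (lookup f p) (lookup g q))
      = (\<Sum>p\<in>keys f. \<Sum>q\<in>Q. basis_mul p q (lookup f p) (lookup g q))"
    by (rule sum.mono_neutral_right) (use assms in \<open>auto simp: in_keys_iff\<close>)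
  also have "\<dots> = (\<Sum>p\<in>keys f. \<Sum>q\<in>keys g. basis_mul p q (lookup f p) (lookup g q))"
    by (rule sum.cong[OF refl], rule sum.mono_neutral_right)
      (use assms in \<open>auto simp: in_keys_iff\<close>)
  finally show ?thesis by (simp add: rmul_eq_sum_basis_mul)
qed

lemma rmul_add_left: "rmul (f + f') g = rmul f g + rmul f' g"
proof -
  let ?P = "keys f \<union> keys f' \<union> keys (f + f')"
  let ?S = "\<lambda>h. \<Sum>p\<in>?P. \<Sum>q\<in>keys g. basis_mul p q (lookup h p) (lookup g q)"
  have "rmul (f + f') g = ?S (f + f')"
    by (rule rmul_eq_sum_basis_mul_superset) auto
  also have "\<dots> = ?S f + ?S f'"
    by (simp only: lookup_add basis_mul_add_left sum.distrib)
  also have "\<dots> = rmul f g + rmul f' g"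
    by (subst (1 2) rmul_eq_sum_basis_mul_superset[where P="?P" and Q="keys g"]) auto
  finally show ?thesis .
qed

lemma rmul_add_right: "rmul f (g + g') = rmul f g + rmul f g'"
proof -
  let ?Q = "keys g \<union> keys g' \<union> keys (g + g')"
  let ?S = "\<lambda>h. \<Sum>p\<in>keys f. \<Sum>q\<in>?Q. basis_mul p q (lookup f p) (lookup h q)"
  have "rmul f (g + g') = ?S (g + g')"
    by (rule rmul_eq_sum_basis_mul_superset) auto
  also have "\<dots> = ?S g + ?S g'"
    by (simp only: lookup_add basis_mul_add_right sum.distrib)
  also have "\<dots> = rmul f g + rmul f g'"
    by (subst (1 2) rmul_eq_sum_basis_mul_superset[where P="keys f" and Q="?Q"]) auto
  finally show ?thesis .
qed

lemma rmul_zero_left[simp]: "rmul 0 g = 0"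
  and rmul_zero_right[simp]: "rmul f 0 = 0"
  by (simp_all add: rmul_def)

lemma rmul_uminus_left: "rmul (- f) g = - rmul f g"
  using rmul_add_left[of "- f" f g] by (simp add: eq_neg_iff_add_eq_0)

lemma rmul_uminus_right: "rmul f (- g) = - rmul f g"
  using rmul_add_right[of f "- g" g] by (simp add: eq_neg_iff_add_eq_0)

lemma rmul_diff_left: "rmul (f - f') g = rmul f g - rmul f' g"
  by (simp only: diff_conv_add_uminus rmul_add_left rmul_uminus_left)

lemma rmul_diff_right: "rmul f (g - g') = rmul f g - rmul f g'"
  by (simp only: diff_conv_add_uminus rmul_add_right rmul_uminus_right)

lemma rmul_sum_left: "rmul (\<Sum>x\<in>A. F x) g = (\<Sum>x\<in>A. rmul (F x) g)"
  by (induction A rule: infinite_finite_induct) (simp_all add: rmul_add_left)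

lemma rmul_sum_right: "rmul f (\<Sum>x\<in>A. G x) = (\<Sum>x\<in>A. rmul f (G x))"
  by (induction A rule: infinite_finite_induct) (simp_all add: rmul_add_right)

lemma rmul_single: "rmul (single p a) (single q b) = basis_mul p q a b"
  by (subst rmul_eq_sum_basis_mul_superset[where P="{p}" and Q="{q}"]) auto

lemma poly_mapping_eq_sum_single: "f = (\<Sum>p\<in>keys f. single p (lookup f p))"
proof (rule poly_mapping_eqI)
  fix k
  have "lookup (\<Sum>p\<in>keys f. single p (lookup f p)) k
      = (\<Sum>p\<in>keys f. if p = k then lookup f p else 0)"
    by (simp add: lookup_sum lookup_single when_def)
  also have "\<dots> = lookup f k" by (simp add: sum.delta in_keys_iff)
  finally show "lookup f k = lookup (\<Sum>p\<in>keys f. single p (lookup f p)) k" by simp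
qed

lemma rmul_eq_sum_single_left: "rmul f u = (\<Sum>p\<in>keys f. rmul (single p (lookup f p)) u)"
  using arg_cong[OF poly_mapping_eq_sum_single[of f], of "\<lambda>f. rmul f u"]
  by (simp only: rmul_sum_left)

lemma rmul_eq_sum_single_right: "rmul u f = (\<Sum>p\<in>keys f. rmul u (single p (lookup f p)))"
  using arg_cong[OF poly_mapping_eq_sum_single[of f], of "rmul u"]
  by (simp only: rmul_sum_right)

section \<open>Signs of products of odd generators\<close>

definition inversions :: "nat set \<Rightarrow> nat set \<Rightarrow> (nat \<times> nat) set" where
  "inversions A B = {(a, b). a \<in> A \<and> b \<in> B \<and> b < a}"

lemma wsign_eq_card_inversions: "wsign A B = (-1) ^ card (inversions A B)"
  by (simp add: wsign_def inversions_def)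

lemma wsign_empty_left[simp]: "wsign {} B = 1"
  and wsign_empty_right[simp]: "wsign A {} = 1"
  by (simp_all add: wsign_def)

lemma finite_inversions: "finite A \<Longrightarrow> finite B \<Longrightarrow> finite (inversions A B)"
  by (rule finite_subset[of _ "A \<times> B"]) (auto simp: inversions_def)

lemma card_inversions_Un_left:
  assumes "finite A" "finite B" "finite C" "A \<inter> B = {}"
  shows "card (inversions (A \<union> B) C) = card (inversions A C) + card (inversions B C)"
proof -
  have "inversions (A \<union> B) C = inversions A C \<union> inversions B C"
    by (auto simp: inversions_def)
  moreover have "inversions A C \<inter> inversions B C = {}"
    using assms(4) by (auto simp: inversions_def)
  ultimately show ?thesis using assms by (simp add: card_Un_disjoint finite_inversions)
qed

lemma card_inversions_Un_right:
  assumes "finite A" "finite B" "finite C" "B \<inter> C = {}"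
  shows "card (inversions A (B \<union> C)) = card (inversions A B) + card (inversions A C)"
proof -
  have "inversions A (B \<union> C) = inversions A B \<union> inversions A C"
    by (auto simp: inversions_def)
  moreover have "inversions A B \<inter> inversions A C = {}"
    using assms(4) by (auto simp: inversions_def)
  ultimately show ?thesis using assms by (simp add: card_Un_disjoint finite_inversions)
qed

lemma card_inversions_swap:
  assumes "finite A" "finite B" "A \<inter> B = {}"
  shows "card (inversions A B) + card (inversions B A) = card A * card B"
proof -
  have "inversions A B \<union> prod.swap ` inversions B A = A \<times> B"
    using assms(3) by (auto simp: inversions_def image_iff)
  moreover have "inversions A B \<inter> prod.swap ` inversions B A = {}"
    by (auto simp: inversions_def)
  moreover have "card (prod.swap ` inversions B A) = card (inversions B A)"
    by (rule card_image) simp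
  ultimately show ?thesis using assms
    by (metis card_Un_disjoint card_cartesian_product finite_imageI finite_inversions)
qed

(* wsign counts inversions with card, which is 0 on infinite sets; the empty cases are trivial. *)
lemma wsign_assoc:
  assumes "(finite A \<and> finite B \<and> finite C) \<or> A = {} \<or> B = {} \<or> C = {}"
    and "A \<inter> B = {}" "A \<inter> C = {}" "B \<inter> C = {}"
  shows "wsign A B * wsign (A \<union> B) C = wsign A (B \<union> C) * wsign B C"
proof -
  consider "finite A \<and> finite B \<and> finite C" | "A = {}" | "B = {}" | "C = {}"
    using assms(1) by blast
  then show ?thesis
  proof cases
    case 1
    then show ?thesis using assms
      by (simp add: wsign_eq_card_inversions card_inversions_Un_left card_inversions_Un_right
          power_add)
  qed auto
qed

lemma wsign_singleton: "wsign {j} B = (-1) ^ card {b\<in>B. b < j}"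
proof -
  have "inversions {j} B = (\<lambda>b. (j, b)) ` {b\<in>B. b < j}" by (auto simp: inversions_def)
  moreover have "card ((\<lambda>b. (j, b)) ` {b\<in>B. b < j}) = card {b\<in>B. b < j}"
    by (rule card_image) (simp add: inj_on_def)
  ultimately show ?thesis by (simp add: wsign_eq_card_inversions)
qed

lemma wsign_singleton_less:
  assumes "\<And>b. b \<in> B \<Longrightarrow> j < b"
  shows "wsign {j} B = 1"
proof -
  have empty: "{b\<in>B. b < j} = {}" using assms by fastforce
  show ?thesis unfolding wsign_singleton empty by simp
qed

lemma wsign_singleton_insert:
  assumes "finite B" "l \<notin> B" "l < j"
  shows "wsign {j} (insert l B) = - wsign {j} B"
proof -
  have "{b\<in>insert l B. b < j} = insert l {b\<in>B. b < j}" using assms(3) by auto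
  then have "card {b\<in>insert l B. b < j} = Suc (card {b\<in>B. b < j})" using assms by simp
  then show ?thesis by (simp add: wsign_singleton)
qed

lemma wsign_square: "wsign A B * wsign A B = 1"
  by (simp add: wsign_def flip: power_add mult_2)

lemma basis_mul_assoc:
  assumes "(finite (snd p) \<and> finite (snd q) \<and> finite (snd r))
    \<or> snd p = {} \<or> snd q = {} \<or> snd r = {}"
  shows "rmul (basis_mul p q a b) (single r c) = rmul (single p a) (basis_mul q r b c)"
proof (cases "snd p \<inter> snd q = {} \<and> snd q \<inter> snd r = {} \<and> snd p \<inter> snd r = {}")
  case True
  have "wsign (snd p) (snd q) * wsign (snd p \<union> snd q) (snd r)
      = wsign (snd p) (snd q \<union> snd r) * wsign (snd q) (snd r)"
    using wsign_assoc[OF assms] True by auto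
  then have sign: "wsign (snd p \<union> snd q) (snd r) * (wsign (snd p) (snd q) * a * b) * c =
      wsign (snd p) (snd q \<union> snd r) * a * (wsign (snd q) (snd r) * b * c)"
    by (simp add: algebra_simps)
  show ?thesis using True
    by (simp add: basis_mul_def rmul_single Int_Un_distrib Int_Un_distrib2 add.assoc Un_assoc)
      (metis sign)
next
  case False
  then show ?thesis by (auto simp: basis_mul_def rmul_single Int_Un_distrib Int_Un_distrib2)
qed

lemma rmul_assoc:
  assumes "\<And>p q r. p \<in> keys f \<Longrightarrow> q \<in> keys g \<Longrightarrow> r \<in> keys h \<Longrightarrow>
    (finite (snd p) \<and> finite (snd q) \<and> finite (snd r)) \<or> snd p = {} \<or> snd q = {} \<or> snd r = {}"
  shows "rmul (rmul f g) h = rmul f (rmul g h)"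
proof -
  have "rmul (rmul f g) h = (\<Sum>p\<in>keys f. \<Sum>q\<in>keys g. \<Sum>r\<in>keys h.
      rmul (basis_mul p q (lookup f p) (lookup g q)) (single r (lookup h r)))"
  proof -
    have "rmul (rmul f g) h
        = (\<Sum>p\<in>keys f. \<Sum>q\<in>keys g. rmul (basis_mul p q (lookup f p) (lookup g q)) h)"
      by (simp only: rmul_eq_sum_basis_mul[of f g] rmul_sum_left)
    then show ?thesis by (simp only: rmul_eq_sum_single_right[of _ h])
  qed
  also have "\<dots> = (\<Sum>p\<in>keys f. \<Sum>q\<in>keys g. \<Sum>r\<in>keys h.
      rmul (single p (lookup f p)) (basis_mul q r (lookup g q) (lookup h r)))"
    by (intro sum.cong refl basis_mul_assoc assms)
  also have "\<dots> = (\<Sum>p\<in>keys f. rmul (single p (lookup f p)) (rmul g h))"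
    by (simp only: rmul_eq_sum_basis_mul[of g h] rmul_sum_right)
  also have "\<dots> = rmul f (rmul g h)" by (rule rmul_eq_sum_single_left[symmetric])
  finally show ?thesis .
qed

definition omega_free :: "R \<Rightarrow> bool" where
  "omega_free f = (\<forall>p\<in>keys f. snd p = {})"

definition omega_finite :: "R \<Rightarrow> bool" where
  "omega_finite f = (\<forall>p\<in>keys f. finite (snd p))"

definition omega_odd :: "R \<Rightarrow> bool" where
  "omega_odd f = (\<forall>p\<in>keys f. finite (snd p) \<and> odd (card (snd p)))"

lemma rmul_assoc_omega_finite:
  "omega_finite f \<Longrightarrow> omega_finite g \<Longrightarrow> omega_finite h \<Longrightarrow> rmul (rmul f g) h = rmul f (rmul g h)"
  by (rule rmul_assoc) (auto simp: omega_finite_def)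

lemma rmul_assoc_omega_free_left: "omega_free f \<Longrightarrow> rmul (rmul f g) h = rmul f (rmul g h)"
  by (rule rmul_assoc) (auto simp: omega_free_def)

lemma rmul_assoc_omega_free_middle: "omega_free g \<Longrightarrow> rmul (rmul f g) h = rmul f (rmul g h)"
  by (rule rmul_assoc) (auto simp: omega_free_def)

lemma basis_mul_commute: "snd p = {} \<Longrightarrow> basis_mul p q a b = basis_mul q p b a"
  by (simp add: basis_mul_def add.commute mult.commute)

lemma rmul_commute_omega_free:
  assumes "omega_free f"
  shows "rmul f g = rmul g f"
proof -
  have "rmul f g = (\<Sum>p\<in>keys f. \<Sum>q\<in>keys g. basis_mul q p (lookup g q) (lookup f p))"
    unfolding rmul_eq_sum_basis_mul using assms
    by (intro sum.cong refl basis_mul_commute) (auto simp: omega_free_def)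
  also have "\<dots> = rmul g f" unfolding rmul_eq_sum_basis_mul by (rule sum.swap)
  finally show ?thesis .
qed

lemma rmul_left_commute_omega_free: "omega_free e \<Longrightarrow> rmul u (rmul e v) = rmul e (rmul u v)"
  by (metis rmul_assoc_omega_free_left rmul_assoc_omega_free_middle rmul_commute_omega_free)

lemma basis_mul_anticommute:
  assumes "finite (snd p)" "finite (snd q)" "odd (card (snd p))" "odd (card (snd q))"
  shows "basis_mul p q a b = - basis_mul q p b a"
proof (cases "snd p \<inter> snd q = {}")
  case True
  then have "card (inversions (snd p) (snd q)) + card (inversions (snd q) (snd p))
      = card (snd p) * card (snd q)"
    using assms by (simp add: card_inversions_swap)
  then have "odd (card (inversions (snd p) (snd q)) + card (inversions (snd q) (snd p)))"
    using assms by simp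
  then have "wsign (snd p) (snd q) = - wsign (snd q) (snd p)"
    by (auto simp: wsign_eq_card_inversions neg_one_odd_power neg_one_even_power)
  then show ?thesis using True
    by (auto simp: basis_mul_def add.commute Un_commute Int_commute single_uminus ac_simps)
qed (auto simp: basis_mul_def Int_commute)

lemma rmul_anticommute_omega_odd:
  assumes "omega_odd f" "omega_odd g"
  shows "rmul f g = - rmul g f"
proof -
  have "rmul f g = (\<Sum>p\<in>keys f. \<Sum>q\<in>keys g. - basis_mul q p (lookup g q) (lookup f p))"
    unfolding rmul_eq_sum_basis_mul using assms
    by (intro sum.cong refl basis_mul_anticommute) (auto simp: omega_odd_def)
  also have "\<dots> = - rmul g f"
    unfolding rmul_eq_sum_basis_mul by (simp add: sum_negf) (rule sum.swap)
  finally show ?thesis .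
qed

lemma rmul_self_omega_odd:
  assumes "omega_odd f"
  shows "rmul f f = 0"
proof -
  have "rmul f f = - rmul f f" by (rule rmul_anticommute_omega_odd[OF assms assms])
  then have "\<And>k. lookup (rmul f f) k = - lookup (rmul f f) k" by (metis lookup_uminus)
  then show ?thesis by (intro poly_mapping_eqI) simp
qed

lemma keys_rmul:
  assumes "k \<in> keys (rmul f g)"
  shows "\<exists>p\<in>keys f. \<exists>q\<in>keys g. snd p \<inter> snd q = {} \<and> k = (fst p + fst q, snd p \<union> snd q)"
proof (rule ccontr)
  assume none: "\<not> ?thesis"
  have "lookup (rmul f g) k
      = (\<Sum>p\<in>keys f. \<Sum>q\<in>keys g. lookup (basis_mul p q (lookup f p) (lookup g q)) k)"
    by (simp add: rmul_eq_sum_basis_mul lookup_sum)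
  also have "\<dots> = 0"
    using none by (intro sum.neutral ballI) (auto simp: basis_mul_def lookup_single when_def)
  finally show False using assms by (simp add: in_keys_iff)
qed

lemma omega_finite_rmul:
  assumes "omega_finite f" "omega_finite g"
  shows "omega_finite (rmul f g)"
  unfolding omega_finite_def
proof
  fix k assume "k \<in> keys (rmul f g)"
  then obtain p q where "p \<in> keys f" "q \<in> keys g" "k = (fst p + fst q, snd p \<union> snd q)"
    using keys_rmul by blast
  then show "finite (snd k)" using assms by (auto simp: omega_finite_def)
qed

lemma omega_free_rmul:
  assumes "omega_free f" "omega_free g"
  shows "omega_free (rmul f g)"
  unfolding omega_free_def
proof
  fix k assume "k \<in> keys (rmul f g)"
  then obtain p q where "p \<in> keys f" "q \<in> keys g" "k = (fst p + fst q, snd p \<union> snd q)"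
    using keys_rmul by blast
  then show "snd k = {}" using assms by (auto simp: omega_free_def)
qed

lemma omega_odd_rmul:
  assumes "omega_free f" "omega_odd g"
  shows "omega_odd (rmul f g)"
  unfolding omega_odd_def
proof
  fix k assume "k \<in> keys (rmul f g)"
  then obtain p q where "p \<in> keys f" "q \<in> keys g" "k = (fst p + fst q, snd p \<union> snd q)"
    using keys_rmul by blast
  then show "finite (snd k) \<and> odd (card (snd k))"
    using assms by (auto simp: omega_free_def omega_odd_def)
qed

lemma omega_finite_diff: "omega_finite f \<Longrightarrow> omega_finite g \<Longrightarrow> omega_finite (f - g)"
  unfolding omega_finite_def using keys_diff[of f g] by auto

lemma omega_free_diff: "omega_free f \<Longrightarrow> omega_free g \<Longrightarrow> omega_free (f - g)"
  unfolding omega_free_def using keys_diff[of f g] by auto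

lemma omega_odd_add: "omega_odd f \<Longrightarrow> omega_odd g \<Longrightarrow> omega_odd (f + g)"
  unfolding omega_odd_def using keys_add[of f g] by auto

lemma omega_finite_zero[simp]: "omega_finite 0"
  by (simp add: omega_finite_def)

lemma omega_free_imp_omega_finite: "omega_free f \<Longrightarrow> omega_finite f"
  by (simp add: omega_free_def omega_finite_def)

lemma omega_odd_imp_omega_finite: "omega_odd f \<Longrightarrow> omega_finite f"
  by (simp add: omega_odd_def omega_finite_def)

lemma omega_free_rconst[simp]: "omega_free (rconst c)"
  by (simp add: omega_free_def rconst_def)

lemma omega_free_X[simp]: "omega_free (X j)"
  by (simp add: omega_free_def X_def)

lemma omega_odd_W[simp]: "omega_odd (W j)"
  by (simp add: omega_odd_def W_def)

lemma omega_finite_rconst[simp]: "omega_finite (rconst c)"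
  by (simp add: omega_free_imp_omega_finite)

lemma omega_finite_X[simp]: "omega_finite (X j)"
  by (simp add: omega_free_imp_omega_finite)

lemma omega_finite_W[simp]: "omega_finite (W j)"
  by (simp add: omega_odd_imp_omega_finite)

lemma rmul_left_anticommute_omega_odd:
  assumes "omega_odd u" "omega_odd v" "omega_finite r"
  shows "rmul u (rmul v r) = - rmul v (rmul u r)"
proof -
  have fin: "omega_finite u" "omega_finite v"
    using assms by (simp_all add: omega_odd_imp_omega_finite)
  have "rmul u (rmul v r) = rmul (rmul u v) r"
    using fin assms(3) by (simp add: rmul_assoc_omega_finite)
  also have "\<dots> = - rmul (rmul v u) r"
    using rmul_anticommute_omega_odd[OF assms(1,2)] by (simp add: rmul_uminus_left)
  also have "\<dots> = - rmul v (rmul u r)"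
    using fin assms(3) by (simp add: rmul_assoc_omega_finite)
  finally show ?thesis .
qed

lemma rmul_left_self_omega_odd:
  assumes "omega_odd u" "omega_finite r"
  shows "rmul u (rmul u r) = 0"
  using assms rmul_self_omega_odd[OF assms(1)]
  by (simp add: omega_odd_imp_omega_finite flip: rmul_assoc_omega_finite)

lemma rmul_rconst_single: "rmul (rconst c) (single p b) = single p (c * b)"
  by (simp add: rconst_def rmul_single basis_mul_def)

lemma rmul_single_rconst: "rmul (single p b) (rconst c) = single p (b * c)"
  by (simp add: rconst_def rmul_single basis_mul_def)

lemma rmul_one_left[simp]: "rmul (rconst 1) f = f"
  by (subst rmul_eq_sum_single_right)
    (simp add: rmul_rconst_single flip: poly_mapping_eq_sum_single)

lemma rmul_one_right[simp]: "rmul f (rconst 1) = f"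
  by (subst rmul_eq_sum_single_left)
    (simp add: rmul_single_rconst flip: poly_mapping_eq_sum_single)

lemma rmul_rconst_rconst: "rmul (rconst a) (rconst b) = rconst (a * b)"
  by (simp add: rconst_def rmul_rconst_single[unfolded rconst_def])

lemma rmul_rconst_rconst_left: "rmul (rconst a) (rmul (rconst b) f) = rmul (rconst (a * b)) f"
  by (simp add: rmul_rconst_rconst flip: rmul_assoc_omega_free_left)

lemma rconst_zero[simp]: "rconst 0 = 0"
  by (simp add: rconst_def)

lemma rconst_uminus: "rconst (- a) = - rconst a"
  by (simp add: rconst_def single_uminus)

lemma rmul_X_single: "rmul (X j) (single q c) = single (single j 1 + fst q, snd q) c"
  by (simp add: X_def rmul_single basis_mul_def)

lemma rmul_X_eq_sum: "rmul (X j) u = (\<Sum>q\<in>keys u. single (single j 1 + fst q, snd q) (lookup u q))"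
  by (subst rmul_eq_sum_single_right) (simp add: rmul_X_single)

lemma lookup_rmul_X_shift: "lookup (rmul (X j) u) (fst r + single j 1, snd r) = lookup u r"
proof -
  have "lookup (rmul (X j) u) (fst r + single j 1, snd r)
      = (\<Sum>q\<in>keys u. if q = r then lookup u q else 0)"
    unfolding rmul_X_eq_sum lookup_sum
    by (intro sum.cong refl) (auto simp: lookup_single when_def add.commute prod_eq_iff)
  also have "\<dots> = lookup u r" by (simp add: sum.delta' in_keys_iff)
  finally show ?thesis .
qed

lemma lookup_rmul_X_eq_0: "lookup \<beta> j = 0 \<Longrightarrow> lookup (rmul (X j) u) (\<beta>, S) = 0"
  unfolding rmul_X_eq_sum lookup_sum
  by (intro sum.neutral ballI) (auto simp: lookup_single when_def lookup_add)

(* Compare coefficients one step beyond the largest x_i-exponent occurring in u. *)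
lemma rmul_X_diff_eq_0D:
  assumes "i \<noteq> j" and "rmul (X i - X j) u = 0"
  shows "u = 0"
proof (rule ccontr)
  assume "u \<noteq> 0"
  define m where "m = Max ((\<lambda>q. lookup (fst q) i) ` keys u)"
  have "m \<in> (\<lambda>q. lookup (fst q) i) ` keys u"
    unfolding m_def using \<open>u \<noteq> 0\<close> by (intro Max_in) auto
  then obtain q0 where q0: "q0 \<in> keys u" "lookup (fst q0) i = m" by (auto simp del: in_keys_iff)
  have m_max: "\<And>q. q \<in> keys u \<Longrightarrow> lookup (fst q) i \<le> m"
    unfolding m_def by simp
  define \<beta> where "\<beta> = fst q0 + single i 1"
  have "lookup (rmul (X j) u) (\<beta>, snd q0) = 0"
  proof (cases "lookup \<beta> j = 0")
    case True
    then show ?thesis by (rule lookup_rmul_X_eq_0)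
  next
    case False
    define \<beta>' where "\<beta>' = \<beta> - single j 1"
    have \<beta>_eq: "\<beta> = \<beta>' + single j 1"
      using False unfolding \<beta>'_def
      by (intro poly_mapping_eqI) (auto simp: lookup_add lookup_minus lookup_single when_def)
    have "lookup \<beta>' i = m + 1"
      using assms(1) q0 unfolding \<beta>'_def \<beta>_def
      by (simp add: lookup_add lookup_minus lookup_single when_def)
    then have "(\<beta>', snd q0) \<notin> keys u" using m_max by fastforce
    then show ?thesis
      using lookup_rmul_X_shift[of j u "(\<beta>', snd q0)"] \<beta>_eq by (simp add: in_keys_iff)
  qed
  moreover have "lookup (rmul (X i) u) (\<beta>, snd q0) = lookup u q0"
    using lookup_rmul_X_shift[of i u q0] unfolding \<beta>_def by simp
  moreover have "lookup (rmul (X i - X j) u) (\<beta>, snd q0) = 0" using assms(2) by simp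
  ultimately have "lookup u q0 = 0" by (simp add: rmul_diff_left lookup_minus)
  then show False using q0 by (simp add: in_keys_iff)
qed

section \<open>Evaluation homomorphisms\<close>

lemma rprod_Nil[simp]: "rprod [] = rconst 1"
  by (simp add: rprod_def)

lemma rprod_Cons[simp]: "rprod (a # xs) = rmul a (rprod xs)"
  by (simp add: rprod_def)

lemma omega_free_rprod: "(\<And>x. x \<in> set A \<Longrightarrow> omega_free x) \<Longrightarrow> omega_free (rprod A)"
  by (induction A) (auto intro: omega_free_rmul)

lemma omega_finite_rprod: "(\<And>x. x \<in> set A \<Longrightarrow> omega_finite x) \<Longrightarrow> omega_finite (rprod A)"
  by (induction A) (auto intro: omega_finite_rmul)

lemma rprod_append_omega_free:
  "(\<And>x. x \<in> set A \<Longrightarrow> omega_free x) \<Longrightarrow> rprod (A @ B) = rmul (rprod A) (rprod B)"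
  by (induction A) (auto simp: rmul_assoc_omega_free_left)

definition var_list :: "(nat \<Rightarrow>\<^sub>0 nat) \<Rightarrow> nat list" where
  "var_list \<alpha> = concat (map (\<lambda>j. replicate (lookup \<alpha> j) j) (sorted_list_of_set (keys \<alpha>)))"

definition eval_monom :: "(nat \<Rightarrow> R) \<Rightarrow> (nat \<Rightarrow> R) \<Rightarrow> basis \<Rightarrow> R" where
  "eval_monom px pw p = rprod (map px (var_list (fst p)) @ map pw (sorted_list_of_set (snd p)))"

lemma var_list_zero[simp]: "var_list 0 = []"
  by (simp add: var_list_def)

lemma hom_eval_eq_sum:
  "hom_eval px pw f = (\<Sum>p\<in>keys f. rmul (rconst (lookup f p)) (eval_monom px pw p))"
  unfolding hom_eval_def eval_monom_def var_list_def by (simp add: map_concat o_def)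

lemma hom_eval_eq_sum_superset:
  "finite P \<Longrightarrow> keys f \<subseteq> P \<Longrightarrow>
    hom_eval px pw f = (\<Sum>p\<in>P. rmul (rconst (lookup f p)) (eval_monom px pw p))"
  unfolding hom_eval_eq_sum by (rule sum.mono_neutral_right[symmetric]) (auto simp: in_keys_iff)

lemma hom_eval_add: "hom_eval px pw (f + g) = hom_eval px pw f + hom_eval px pw g"
proof -
  let ?P = "keys f \<union> keys g \<union> keys (f + g)"
  let ?S = "\<lambda>h. \<Sum>p\<in>?P. rmul (rconst (lookup h p)) (eval_monom px pw p)"
  have "hom_eval px pw (f + g) = ?S (f + g)"
    by (rule hom_eval_eq_sum_superset) auto
  also have "\<dots> = ?S f + ?S g"
    by (simp only: lookup_add rconst_def single_add rmul_add_left sum.distrib)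
  also have "\<dots> = hom_eval px pw f + hom_eval px pw g"
    by (subst (1 2) hom_eval_eq_sum_superset[where P="?P"]) auto
  finally show ?thesis .
qed

lemma hom_eval_zero[simp]: "hom_eval px pw 0 = 0"
  by (simp add: hom_eval_def)

lemma hom_eval_uminus: "hom_eval px pw (- f) = - hom_eval px pw f"
  using hom_eval_add[of px pw "- f" f] by (simp add: eq_neg_iff_add_eq_0)

lemma hom_eval_diff: "hom_eval px pw (f - g) = hom_eval px pw f - hom_eval px pw g"
  by (simp only: diff_conv_add_uminus hom_eval_add hom_eval_uminus)

lemma hom_eval_sum: "hom_eval px pw (\<Sum>x\<in>A. F x) = (\<Sum>x\<in>A. hom_eval px pw (F x))"
  by (induction A rule: infinite_finite_induct) (simp_all add: hom_eval_add)

lemma hom_eval_single: "hom_eval px pw (single p c) = rmul (rconst c) (eval_monom px pw p)"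
  by (subst hom_eval_eq_sum_superset[where P="{p}"]) (auto simp: lookup_single)

lemma count_mset_concat_map:
  "count (mset (concat (map F L))) k = sum_list (map (\<lambda>j. count (mset (F j)) k) L)"
  by (induction L) auto

lemma count_var_list: "count (mset (var_list \<alpha>)) k = lookup \<alpha> k"
proof -
  have "count (mset (var_list \<alpha>)) k
      = sum_list (map (\<lambda>j. if k = j then lookup \<alpha> j else 0) (sorted_list_of_set (keys \<alpha>)))"
    unfolding var_list_def count_mset_concat_map by (simp add: count_replicate_mset)
  also have "\<dots> = (\<Sum>j\<in>keys \<alpha>. if k = j then lookup \<alpha> j else 0)"
    by (simp add: sum_list_distinct_conv_sum_set)
  also have "\<dots> = lookup \<alpha> k" by (simp add: sum.delta' in_keys_iff)
  finally show ?thesis .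
qed

lemma mset_var_list_add_single: "mset (var_list (single j 1 + \<alpha>)) = mset (j # var_list \<alpha>)"
  by (rule multiset_eqI) (simp add: count_var_list lookup_add lookup_single when_def)

lemma rprod_remove1:
  assumes "omega_free (px x)" "x \<in> set ys"
  shows "rprod (map px ys @ L) = rmul (px x) (rprod (map px (remove1 x ys) @ L))"
  using assms(2)
proof (induction ys)
  case (Cons y ys)
  show ?case
  proof (cases "y = x")
    case False
    then have "x \<in> set ys" using Cons by auto
    then show ?thesis using Cons False rmul_left_commute_omega_free[OF assms(1)] by auto
  qed simp
qed simp

lemma rprod_perm:
  assumes "\<And>j. omega_free (px j)"
  shows "mset xs = mset ys \<Longrightarrow> rprod (map px xs @ L) = rprod (map px ys @ L)"
proof (induction xs arbitrary: ys)
  case (Cons x xs)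
  then have x: "x \<in> set ys" by (metis list.set_intros(1) set_mset_mset)
  have "mset xs = mset (remove1 x ys)"
    using Cons.prems by (metis add_mset_remove_trivial mset.simps(2) mset_remove1)
  then have "rprod (map px xs @ L) = rprod (map px (remove1 x ys) @ L)" by (rule Cons.IH)
  then show ?case using rprod_remove1[of px x ys L, OF assms[of x] x] by simp
qed simp

lemma eval_monom_add_single:
  assumes "\<And>j. omega_free (px j)"
  shows "eval_monom px pw (single j 1 + \<alpha>, S) = rmul (px j) (eval_monom px pw (\<alpha>, S))"
  unfolding eval_monom_def using rprod_perm[OF assms mset_var_list_add_single] by simp

lemma hom_eval_rmul_X:
  assumes "\<And>j. omega_free (px j)"
  shows "hom_eval px pw (rmul (X j) f) = rmul (px j) (hom_eval px pw f)"
proof -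
  have "hom_eval px pw (rmul (X j) f)
      = (\<Sum>q\<in>keys f. rmul (rconst (lookup f q)) (eval_monom px pw (single j 1 + fst q, snd q)))"
    by (simp add: rmul_X_eq_sum hom_eval_sum hom_eval_single)
  also have "\<dots> = (\<Sum>q\<in>keys f. rmul (px j) (rmul (rconst (lookup f q)) (eval_monom px pw q)))"
  proof (intro sum.cong refl)
    fix q
    have "eval_monom px pw (single j 1 + fst q, snd q) = rmul (px j) (eval_monom px pw q)"
      using eval_monom_add_single[of px pw j "fst q" "snd q", OF assms] by simp
    then show "rmul (rconst (lookup f q)) (eval_monom px pw (single j 1 + fst q, snd q))
        = rmul (px j) (rmul (rconst (lookup f q)) (eval_monom px pw q))"
      by (simp add: rmul_left_commute_omega_free[OF assms])
  qed
  also have "\<dots> = rmul (px j) (hom_eval px pw f)"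
    by (simp add: hom_eval_eq_sum rmul_sum_right)
  finally show ?thesis .
qed

lemma rmul_rprod_member_eq_0:
  assumes odd: "\<And>a. omega_odd (pw a)" and "j \<in> set L"
  shows "rmul (pw j) (rprod (map pw L)) = 0"
  using assms(2)
proof (induction L)
  case (Cons l L)
  have fin: "omega_finite (rprod (map pw L))"
    by (rule omega_finite_rprod) (auto intro: omega_odd_imp_omega_finite odd)
  show ?case
  proof (cases "j = l")
    case True
    then show ?thesis using rmul_left_self_omega_odd[OF odd fin] by simp
  next
    case False
    then show ?thesis
      using Cons rmul_left_anticommute_omega_odd[OF odd odd fin, of j l] by simp
  qed
qed simp

lemma rprod_insort:
  assumes odd: "\<And>a. omega_odd (pw a)"
  shows "sorted_wrt (<) L \<Longrightarrow> j \<notin> set L \<Longrightarrow>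
    rprod (map pw (insort j L))
      = rmul (rconst (wsign {j} (set L))) (rmul (pw j) (rprod (map pw L)))"
proof (induction L)
  case (Cons l L)
  let ?R = "rprod (map pw L)"
  have fin: "omega_finite ?R"
    by (rule omega_finite_rprod) (auto intro: omega_odd_imp_omega_finite odd)
  have greater: "\<And>b. b \<in> set L \<Longrightarrow> l < b" using Cons.prems by auto
  show ?case
  proof (cases "j < l")
    case True
    then have "wsign {j} (set (l # L)) = 1" using greater by (intro wsign_singleton_less) fastforce
    then show ?thesis using True by simp
  next
    case False
    then have "l < j" using Cons.prems by simp
    let ?w = "wsign {j} (set L)"
    have w: "wsign {j} (insert l (set L)) = - ?w"
      using wsign_singleton_insert[of "set L" l j] \<open>l < j\<close> greater by auto
    have "rprod (map pw (insort j (l # L))) = rmul (pw l) (rmul (rconst ?w) (rmul (pw j) ?R))"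
      using Cons False by simp
    also have "\<dots> = rmul (rconst ?w) (rmul (pw l) (rmul (pw j) ?R))"
      by (rule rmul_left_commute_omega_free) simp
    also have "\<dots> = rmul (rconst ?w) (- rmul (pw j) (rmul (pw l) ?R))"
      using rmul_left_anticommute_omega_odd[OF odd odd fin, of l j] by simp
    also have "\<dots> = rmul (rconst (wsign {j} (set (l # L)))) (rmul (pw j) (rprod (map pw (l # L))))"
      by (simp add: w rconst_uminus rmul_uminus_left rmul_uminus_right)
    finally show ?thesis .
  qed
qed simp

lemma hom_eval_basis_mul_W:
  assumes omega_free: "\<And>j. omega_free (px j)" and odd: "\<And>a. omega_odd (pw a)"
    and "finite S"
  shows "hom_eval px pw (basis_mul (0, {j}) (\<alpha>, S) 1 c)
    = rmul (pw j) (rmul (rconst c) (eval_monom px pw (\<alpha>, S)))"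
proof -
  let ?P = "rprod (map px (var_list \<alpha>))"
  let ?Q = "rprod (map pw (sorted_list_of_set S))"
  have eval_monom_eq:
    "\<And>T. eval_monom px pw (\<alpha>, T) = rmul ?P (rprod (map pw (sorted_list_of_set T)))"
    unfolding eval_monom_def fst_conv snd_conv
    by (rule rprod_append_omega_free) (auto intro: omega_free)
  have omega_free_P: "omega_free ?P" by (rule omega_free_rprod) (auto intro: omega_free)
  have "rmul (pw j) (rmul (rconst c) (rmul ?P ?Q)) = rmul (rconst c) (rmul (pw j) (rmul ?P ?Q))"
    by (rule rmul_left_commute_omega_free) simp
  also have "\<dots> = rmul (rconst c) (rmul ?P (rmul (pw j) ?Q))"
    using rmul_left_commute_omega_free[OF omega_free_P] by simp
  finally have rhs: "rmul (pw j) (rmul (rconst c) (eval_monom px pw (\<alpha>, S)))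
      = rmul (rconst c) (rmul ?P (rmul (pw j) ?Q))"
    unfolding eval_monom_eq .
  show ?thesis
  proof (cases "j \<in> S")
    case True
    then have "rmul (pw j) ?Q = 0" using rmul_rprod_member_eq_0[of pw, OF odd] \<open>finite S\<close> by simp
    then show ?thesis using True unfolding rhs by (simp add: basis_mul_def)
  next
    case False
    let ?w = "wsign {j} S"
    have "rprod (map pw (sorted_list_of_set (insert j S))) = rmul (rconst ?w) (rmul (pw j) ?Q)"
      using rprod_insort[of pw, OF odd, where L="sorted_list_of_set S" and j=j] \<open>finite S\<close> False
      by (simp add: sorted_list_of_set_insert)
    then have "hom_eval px pw (basis_mul (0, {j}) (\<alpha>, S) 1 c)
        = rmul (rconst (?w * c)) (rmul (rconst ?w) (rmul ?P (rmul (pw j) ?Q)))"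
      using False rmul_left_commute_omega_free[OF omega_free_rconst, of ?P ?w "rmul (pw j) ?Q"]
      by (simp add: basis_mul_def hom_eval_single eval_monom_eq)
    also have "\<dots> = rmul (rconst (?w * c * ?w)) (rmul ?P (rmul (pw j) ?Q))"
      by (simp add: rmul_rconst_rconst_left)
    also have "?w * c * ?w = c" using wsign_square[of "{j}" S] by (simp add: algebra_simps)
    finally show ?thesis unfolding rhs by simp
  qed
qed

lemma hom_eval_rmul_W:
  assumes "\<And>j. omega_free (px j)" "\<And>a. omega_odd (pw a)" "omega_finite f"
  shows "hom_eval px pw (rmul (W j) f) = rmul (pw j) (hom_eval px pw f)"
proof -
  have "hom_eval px pw (rmul (W j) f)
      = (\<Sum>q\<in>keys f. hom_eval px pw (basis_mul (0, {j}) q 1 (lookup f q)))"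
    by (subst rmul_eq_sum_single_right) (simp add: hom_eval_sum W_def rmul_single)
  also have "\<dots> = (\<Sum>q\<in>keys f. rmul (pw j) (rmul (rconst (lookup f q)) (eval_monom px pw q)))"
    using assms by (intro sum.cong refl) (auto simp: omega_finite_def hom_eval_basis_mul_W)
  also have "\<dots> = rmul (pw j) (hom_eval px pw f)"
    by (simp add: hom_eval_eq_sum rmul_sum_right)
  finally show ?thesis .
qed

section \<open>The action of s_i\<close>

definition sX :: "nat \<Rightarrow> nat \<Rightarrow> R" where
  "sX i = (\<lambda>j. X (if j = i then Suc i else if j = Suc i then i else j))"

definition sW :: "nat \<Rightarrow> nat \<Rightarrow> R" where
  "sW i = (\<lambda>j. if j = i then W i + rmul (X i - X (Suc i)) (W (Suc i)) else W j)"

lemma s_eq: "s i = hom_eval (sX i) (sW i)"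
  unfolding s_def sX_def sW_def by (rule refl)

lemma omega_free_sX: "omega_free (sX i j)"
  by (simp add: sX_def)

lemma omega_odd_sW: "omega_odd (sW i j)"
  by (simp add: sW_def omega_odd_add omega_odd_rmul omega_free_diff)

lemma s_one: "s i (rconst 1) = rconst 1"
  unfolding s_eq rconst_def hom_eval_single by (simp add: eval_monom_def flip: rconst_def)

lemma s_X_mul: "s i (rmul (X j) f) = rmul (sX i j) (s i f)"
  unfolding s_eq by (rule hom_eval_rmul_X) (rule omega_free_sX)

lemma s_W_mul: "omega_finite f \<Longrightarrow> s i (rmul (W j) f) = rmul (sW i j) (s i f)"
  unfolding s_eq by (rule hom_eval_rmul_W) (auto intro: omega_free_sX omega_odd_sW)

lemma s_W: "s i (W j) = sW i j"
  using s_W_mul[of "rconst 1" i j] by (simp add: s_one)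

lemma s_diff: "s i (f - g) = s i f - s i g"
  unfolding s_eq by (rule hom_eval_diff)

lemma s_zero[simp]: "s i 0 = 0"
  unfolding s_eq by simp

section \<open>Divisibility by x_i - x_(i+1)\<close>

definition X_diff_dvd :: "nat \<Rightarrow> R \<Rightarrow> bool" where
  "X_diff_dvd i u = (\<exists>t. u = rmul (X i - X (Suc i)) t)"

lemma omega_free_X_diff: "omega_free (X i - X (Suc i))"
  by (simp add: omega_free_diff)

lemma X_diff_dvd_zero[simp]: "X_diff_dvd i 0"
  unfolding X_diff_dvd_def by (rule exI[of _ 0]) simp

lemma X_diff_dvd_add: "X_diff_dvd i u \<Longrightarrow> X_diff_dvd i v \<Longrightarrow> X_diff_dvd i (u + v)"
  unfolding X_diff_dvd_def by (metis rmul_add_right)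

lemma X_diff_dvd_sum: "(\<And>x. x \<in> A \<Longrightarrow> X_diff_dvd i (F x)) \<Longrightarrow> X_diff_dvd i (\<Sum>x\<in>A. F x)"
  by (induction A rule: infinite_finite_induct) (auto intro: X_diff_dvd_add)

lemma X_diff_dvd_rmul_left: "X_diff_dvd i u \<Longrightarrow> X_diff_dvd i (rmul a u)"
  unfolding X_diff_dvd_def using rmul_left_commute_omega_free[OF omega_free_X_diff] by metis

lemma X_diff_dvd_rmul_right: "X_diff_dvd i u \<Longrightarrow> X_diff_dvd i (rmul u b)"
  unfolding X_diff_dvd_def using rmul_assoc_omega_free_left[OF omega_free_X_diff] by metis

lemma X_diff_dvd_rprod_diff:
  "list_all2 (\<lambda>a b. X_diff_dvd i (a - b)) A B \<Longrightarrow> X_diff_dvd i (rprod A - rprod B)"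
proof (induction rule: list_all2_induct)
  case (Cons a A b B)
  have "rmul a (rprod A) - rmul b (rprod B) = rmul (a - b) (rprod A) + rmul b (rprod A - rprod B)"
    by (simp add: rmul_diff_left rmul_diff_right)
  then show ?case
    using Cons by (auto intro: X_diff_dvd_add X_diff_dvd_rmul_right X_diff_dvd_rmul_left)
qed simp

lemma X_diff_dvd_X_sX: "X_diff_dvd i (X j - sX i j)"
proof -
  consider "j = i" | "j = Suc i" | "j \<noteq> i \<and> j \<noteq> Suc i" by blast
  then show ?thesis
  proof cases
    case 1
    then show ?thesis unfolding X_diff_dvd_def sX_def by (intro exI[of _ "rconst 1"]) simp
  next
    case 2
    then show ?thesis unfolding X_diff_dvd_def sX_def
      by (intro exI[of _ "- rconst 1"]) (simp add: rmul_uminus_right)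
  qed (simp add: sX_def)
qed

lemma X_diff_dvd_W_sW: "X_diff_dvd i (W j - sW i j)"
proof (cases "j = i")
  case True
  then show ?thesis unfolding X_diff_dvd_def sW_def
    by (intro exI[of _ "- W (Suc i)"]) (simp add: rmul_uminus_right)
qed (simp add: sW_def)

lemma X_diff_dvd_eval_monom_diff: "X_diff_dvd i (eval_monom X W p - eval_monom (sX i) (sW i) p)"
  unfolding eval_monom_def
  by (intro X_diff_dvd_rprod_diff list_all2_appendI)
    (simp_all add: list.rel_map list_all2_same X_diff_dvd_X_sX X_diff_dvd_W_sW)

lemma lookup_sum_list_single: "lookup (sum_list (map (\<lambda>j. single j 1) xs)) k = count (mset xs) k"
  by (induction xs) (auto simp: lookup_add lookup_single when_def)

lemma sum_list_single_var_list: "sum_list (map (\<lambda>j. single j 1) (var_list \<alpha>)) = \<alpha>"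
  by (rule poly_mapping_eqI) (simp only: lookup_sum_list_single count_var_list)

lemma rprod_map_X: "rprod (map X xs) = single (sum_list (map (\<lambda>j. single j 1) xs), {}) 1"
  by (induction xs) (simp_all add: rconst_def rmul_X_single)

lemma rprod_map_W: "sorted_wrt (<) L \<Longrightarrow> rprod (map W L) = single (0, set L) 1"
proof (induction L)
  case (Cons l L)
  then have "wsign {l} (set L) = 1" by (intro wsign_singleton_less) auto
  then show ?case using Cons by (auto simp: W_def rmul_single basis_mul_def)
qed (simp add: rconst_def)

lemma eval_monom_X_W: "finite S \<Longrightarrow> eval_monom X W (\<alpha>, S) = single (\<alpha>, S) 1"
  unfolding eval_monom_def fst_conv snd_conv
  by (subst rprod_append_omega_free)
    (auto simp: rprod_map_X sum_list_single_var_list[simplified] rprod_map_W rmul_single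
      basis_mul_def)

(* hom_eval X W is the identity, so f - s_i f is a combination of differences of products of
   generators with the products of their images. *)
lemma X_diff_dvd_diff_s:
  assumes "omega_finite f"
  shows "X_diff_dvd i (f - s i f)"
proof -
  let ?c = "\<lambda>p. rconst (lookup f p)"
  have "(\<Sum>p\<in>keys f. rmul (?c p) (eval_monom X W p)) = (\<Sum>p\<in>keys f. single p (lookup f p))"
    using assms
    by (intro sum.cong refl) (auto simp: omega_finite_def eval_monom_X_W rmul_rconst_single)
  then have "f - s i f = (\<Sum>p\<in>keys f. rmul (?c p) (eval_monom X W p))
      - (\<Sum>p\<in>keys f. rmul (?c p) (eval_monom (sX i) (sW i) p))"
    by (simp add: s_eq hom_eval_eq_sum flip: poly_mapping_eq_sum_single)
  also have "\<dots> = (\<Sum>p\<in>keys f. rmul (?c p) (eval_monom X W p - eval_monom (sX i) (sW i) p))"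
    by (simp add: rmul_diff_right sum_subtractf)
  finally show ?thesis
    by (simp add: X_diff_dvd_sum X_diff_dvd_rmul_left X_diff_dvd_eval_monom_diff)
qed

lemma T_eqI:
  assumes "rmul (X i - X (Suc i)) t = f - s i f"
  shows "T i f = t"
  unfolding T_def
proof (rule the_equality)
  fix t' assume "rmul (X i - X (Suc i)) t' = f - s i f"
  then have "rmul (X i - X (Suc i)) (t' - t) = 0" using assms by (simp add: rmul_diff_right)
  then have "t' - t = 0" by (rule rmul_X_diff_eq_0D[rotated]) simp
  then show "t' = t" by simp
qed (rule assms)

lemma T_rmul_s_invariant:
  assumes "omega_finite g" "s i g = g"
    and "\<And>f. omega_finite f \<Longrightarrow> s i (rmul g f) = rmul (s i g) (s i f)"
    and "omega_finite f"
  shows "T i (rmul g f) = rmul g (T i f)"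
proof -
  obtain t where t: "f - s i f = rmul (X i - X (Suc i)) t"
    using X_diff_dvd_diff_s[OF assms(4), of i] unfolding X_diff_dvd_def by blast
  have "rmul (X i - X (Suc i)) (rmul g t) = rmul g (rmul (X i - X (Suc i)) t)"
    by (rule rmul_left_commute_omega_free[OF omega_free_X_diff, symmetric])
  also have "\<dots> = rmul g f - rmul g (s i f)" by (simp add: t[symmetric] rmul_diff_right)
  also have "\<dots> = rmul g f - s i (rmul g f)" using assms(2,3,4) by simp
  finally have "T i (rmul g f) = rmul g t" by (rule T_eqI)
  with T_eqI[OF t[symmetric]] show ?thesis by simp
qed

section \<open>The labeled elements\<close>

lemma omega_finite_omega: "omega_finite (omega k a)"
  by (induction k a rule: omega.induct)
    (auto intro: omega_finite_diff omega_finite_rmul omega_finite_X)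

lemma s_omega_mul: "omega_finite f \<Longrightarrow> s i (rmul (omega k a) f) = rmul (s i (omega k a)) (s i f)"
proof (induction k a arbitrary: f rule: omega.induct)
  case (2 k)
  then show ?case by (simp add: s_W_mul s_W)
next
  case (3 k a)
  let ?A = "omega k a" and ?B = "omega (Suc k) a"
  have "s i (rmul (?A - rmul (X (Suc k)) ?B) f) = s i (rmul ?A f - rmul (X (Suc k)) (rmul ?B f))"
    by (simp add: rmul_diff_left rmul_assoc_omega_free_left)
  also have "\<dots> = rmul (s i ?A) (s i f) - rmul (sX i (Suc k)) (rmul (s i ?B) (s i f))"
    using 3 by (simp add: s_diff s_X_mul omega_finite_rmul omega_finite_omega)
  also have "\<dots> = rmul (s i ?A - rmul (sX i (Suc k)) (s i ?B)) (s i f)"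
    by (simp add: rmul_diff_left rmul_assoc_omega_free_left omega_free_sX)
  also have "s i ?A - rmul (sX i (Suc k)) (s i ?B) = s i (?A - rmul (X (Suc k)) ?B)"
    by (simp add: s_diff s_X_mul)
  finally show ?case by simp
qed simp

lemma s_omega_Suc_Suc:
  "s i (omega (Suc k) (Suc a)) = s i (omega k a) - rmul (sX i (Suc k)) (s i (omega (Suc k) a))"
  by (simp add: s_diff s_X_mul)

lemma s_omega:
  assumes "1 \<le> i"
  shows "s i (omega k a) =
    (if k = i then omega i a + rmul (X i - X (Suc i)) (omega (Suc i) a) else omega k a)"
proof (induction a arbitrary: k)
  case 0
  show ?case using assms by (cases k) (auto simp: s_W sW_def)
next
  case (Suc a)
  let ?d = "X i - X (Suc i)"
  show ?case
  proof (cases k)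
    case 0
    then show ?thesis using assms by simp
  next
    case (Suc k')
    consider "Suc k' = i" | "k' = i" | "Suc k' \<noteq> i" "k' \<noteq> i" by blast
    then show ?thesis
    proof cases
      case 1
      have "s i (omega i (Suc a))
          = omega k' a - rmul (X (Suc i)) (omega i a + rmul ?d (omega (Suc i) a))"
        using Suc.IH[of k'] Suc.IH[of i] 1
        by (auto simp: s_omega_Suc_Suc sX_def simp del: omega.simps(3))
      also have "\<dots> = omega k' a - rmul (X (Suc i)) (omega i a)
          - rmul ?d (rmul (X (Suc i)) (omega (Suc i) a))"
        by (simp add: rmul_add_right rmul_left_commute_omega_free[OF omega_free_X_diff]
            algebra_simps)
      also have "\<dots> = omega i (Suc a) + rmul ?d (omega (Suc i) (Suc a))"
        using 1 by (auto simp: rmul_diff_left rmul_diff_right algebra_simps)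
      finally show ?thesis using 1 Suc by simp
    next
      case 2
      have "s i (omega (Suc i) (Suc a))
          = omega i a + rmul ?d (omega (Suc i) a) - rmul (X i) (omega (Suc i) a)"
        using Suc.IH[of i] Suc.IH[of "Suc i"]
        by (simp add: s_omega_Suc_Suc sX_def del: omega.simps(3))
      then show ?thesis using 2 Suc by (simp add: rmul_diff_left)
    next
      case 3
      then show ?thesis
        using Suc.IH[of k'] Suc.IH[of k] Suc
        by (simp add: s_omega_Suc_Suc sX_def del: omega.simps(3)) simp
    qed
  qed
qed

lemma inR_imp_omega_finite: "inR n f \<Longrightarrow> omega_finite f"
  unfolding inR_def omega_finite_def by (meson finite_atLeastAtMost finite_subset)

lemma T_rmul_omega:
  assumes "1 \<le> i" "k \<noteq> i" "omega_finite f"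
  shows "T i (rmul (omega k a) f) = rmul (omega k a) (T i f)"
  using assms s_omega[OF assms(1), of k a]
  by (intro T_rmul_s_invariant omega_finite_omega s_omega_mul) auto

theorem proposition2p11:
  fixes n i k a :: nat
  assumes "1 \<le> i" and "i \<le> n - 1" and "1 \<le> k" and "k \<le> n"
  shows "(i \<noteq> k \<longrightarrow>
            (\<forall>f. inR n f \<longrightarrow> T i (rmul (omega k a) f) = rmul (omega k a) (T i f)))
       \<and> (\<forall>f. inR n f \<longrightarrow>
            T i (rmul (omega i a - rmul (X (Suc i)) (omega (Suc i) a)) f)
              = rmul (omega i a - rmul (X (Suc i)) (omega (Suc i) a)) (T i f))"
  using T_rmul_omega[OF assms(1), of "Suc i" _ "Suc a"] T_rmul_omega[OF assms(1), of k]
  by (auto dest: inR_imp_omega_finite)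

end
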